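(* If $S\subseteq\mathbb{N}^{\mathbb{N}}$ is overguessable, then $S$ is defined by some sentence $\exists x\,\forall y\,\phi$ of $\mathscr{L}_{\max}$ with $\phi$ quantifier-free.
   Context: $\mathbb{N}^{<\mathbb{N}}$ denotes the finite sequences of naturals. $S\subseteq\mathbb{N}^{\mathbb{N}}$ is overguessable if there is a function $\mu:\mathbb{N}^{<\mathbb{N}}\to\mathbb{N}\cup\{\infty\}$ such that (1) for every $f\in S$, the values $\mu(f(0),\ldots,f(n))$ are bounded by some finite number for all sufficiently large $n$; and (2) for every $f\notin S$, $\mu(f(0),\ldots,f(n))\to\infty$ as $n\to\infty$. The language $\mathscr{L}_{\max}$ is a first-order language extended with ellipses: constant symbols $\mathbf{n}$ (also $\bar n$) for each $n\in\mathbb{N}$; an $n$-ary function symbol $\tilde w$ for each $w:\mathbb{N}^n\to\mathbb{N}$ ($n>0$); an $n$-ary predicate symbol $\tilde p$ for each $p\subseteq\mathbb{N}^n$ ($n>0$); an $\mathbb{N}^{<\mathbb{N}}$-ary function symbol $\tilde G$ for each $G:\mathbb{N}^{<\mathbb{N}}\to\mathbb{N}$ (applicable to any finite number of arguments); a unary function symbol $\mathbf{f}$; and a symbol $\cdots_x$ for each variable $x$. Besides the usual terms, for $\mathbb{N}^{<\mathbb{N}}$-ary $G$, terms $u,v$ and variable $x$, $G(u(\mathbf{0}),\cdots_x,u(v))$ is a term with free variables $(FV(u)\setminus\{x\})\cup FV(v)$. Formulas are built as usual. For $f:\mathbb{N}\to\mathbb{N}$, $\mathscr{M}_f$ is the structure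 on $\mathbb{N}$ interpreting every symbol as the object it names and $\mathbf{f}$ as $f$; terms are evaluated as usual, plus $G(u(\mathbf{0}),\cdots_x,u(v))^{s}=G\big(u(x|\mathbf{0})^{s},\ldots,u(x|\overline{v^{s}})^{s}\big)$ under an assignment $s$, where $u(x|c)$ is substitution of the constant $c$ for $x$ in $u$. A sentence $\phi$ defines $S\subseteq\mathbb{N}^{\mathbb{N}}$ if for every $f:\mathbb{N}\to\mathbb{N}$, $\mathscr{M}_f\models\phi$ iff $f\in S$. *)

theory Defs
  imports Main "HOL-Library.Extended_Nat"
begin

definition initseg :: "(nat \<Rightarrow> nat) \<Rightarrow> nat \<Rightarrow> nat list" where
  "initseg f n = map f [0..<Suc n]"

definition overguessable :: "(nat \<Rightarrow> nat) set \<Rightarrow> bool" where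
  "overguessable S \<longleftrightarrow> (\<exists>\<mu> :: nat list \<Rightarrow> enat.
     (\<forall>f \<in> S. \<exists>B::nat. \<exists>N. \<forall>n\<ge>N. \<mu> (initseg f n) \<le> enat B) \<and>
     (\<forall>f. f \<notin> S \<longrightarrow> (\<forall>B::nat. \<exists>N. \<forall>n\<ge>N. enat B \<le> \<mu> (initseg f n))))"

text \<open>Function/predicate symbols are named by the objects they denote. An n-ary
  w : N^n \<rightarrow> N is represented by a function on lists, applied to exactly n arguments
  (well-formedness requires n > 0); likewise for predicates. N^{<N}-ary symbols G
  are functions on lists applicable to any number of arguments.
  Ell G u x v is the ellipsis term G(u(0), ..._x, u(v)).\<close>

datatype trm =
    Var nat
  | Cst nat
  | Fn "nat list \<Rightarrow> nat" "trm list"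
  | GApp "nat list \<Rightarrow> nat" "trm list"
  | FSym trm
  | Ell "nat list \<Rightarrow> nat" trm nat trm

datatype fm =
    Eq trm trm
  | Pred "nat list \<Rightarrow> bool" "trm list"
  | FFalse
  | Neg fm
  | Conj fm fm
  | Disj fm fm
  | Imp fm fm
  | All nat fm
  | Ex nat fm

fun fvt :: "trm \<Rightarrow> nat set" where
  "fvt (Var x) = {x}"
| "fvt (Cst n) = {}"
| "fvt (Fn w ts) = (\<Union>t\<in>set ts. fvt t)"
| "fvt (GApp G ts) = (\<Union>t\<in>set ts. fvt t)"
| "fvt (FSym t) = fvt t"
| "fvt (Ell G u x v) = (fvt u - {x}) \<union> fvt v"

fun fvf :: "fm \<Rightarrow> nat set" where
  "fvf (Eq s t) = fvt s \<union> fvt t"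
| "fvf (Pred p ts) = (\<Union>t\<in>set ts. fvt t)"
| "fvf FFalse = {}"
| "fvf (Neg \<phi>) = fvf \<phi>"
| "fvf (Conj \<phi> \<psi>) = fvf \<phi> \<union> fvf \<psi>"
| "fvf (Disj \<phi> \<psi>) = fvf \<phi> \<union> fvf \<psi>"
| "fvf (Imp \<phi> \<psi>) = fvf \<phi> \<union> fvf \<psi>"
| "fvf (All x \<phi>) = fvf \<phi> - {x}"
| "fvf (Ex x \<phi>) = fvf \<phi> - {x}"

fun wft :: "trm \<Rightarrow> bool" where
  "wft (Var x) = True"
| "wft (Cst n) = True"
| "wft (Fn w ts) = (ts \<noteq> [] \<and> (\<forall>t\<in>set ts. wft t))"
| "wft (GApp G ts) = (\<forall>t\<in>set ts. wft t)"
| "wft (FSym t) = wft t"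
| "wft (Ell G u x v) = (wft u \<and> wft v)"

fun wff :: "fm \<Rightarrow> bool" where
  "wff (Eq s t) = (wft s \<and> wft t)"
| "wff (Pred p ts) = (ts \<noteq> [] \<and> (\<forall>t\<in>set ts. wft t))"
| "wff FFalse = True"
| "wff (Neg \<phi>) = wff \<phi>"
| "wff (Conj \<phi> \<psi>) = (wff \<phi> \<and> wff \<psi>)"
| "wff (Disj \<phi> \<psi>) = (wff \<phi> \<and> wff \<psi>)"
| "wff (Imp \<phi> \<psi>) = (wff \<phi> \<and> wff \<psi>)"
| "wff (All x \<phi>) = wff \<phi>"
| "wff (Ex x \<phi>) = wff \<phi>"

fun qfree :: "fm \<Rightarrow> bool" where
  "qfree (Eq s t) = True"
| "qfree (Pred p ts) = True"
| "qfree FFalse = True"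
| "qfree (Neg \<phi>) = qfree \<phi>"
| "qfree (Conj \<phi> \<psi>) = (qfree \<phi> \<and> qfree \<psi>)"
| "qfree (Disj \<phi> \<psi>) = (qfree \<phi> \<and> qfree \<psi>)"
| "qfree (Imp \<phi> \<psi>) = (qfree \<phi> \<and> qfree \<psi>)"
| "qfree (All x \<phi>) = False"
| "qfree (Ex x \<phi>) = False"

fun subst :: "trm \<Rightarrow> nat \<Rightarrow> nat \<Rightarrow> trm" where
  "subst (Var y) x c = (if y = x then Cst c else Var y)"
| "subst (Cst n) x c = Cst n"
| "subst (Fn w ts) x c = Fn w (map (\<lambda>t. subst t x c) ts)"
| "subst (GApp G ts) x c = GApp G (map (\<lambda>t. subst t x c) ts)"
| "subst (FSym t) x c = FSym (subst t x c)"
| "subst (Ell G u y v) x c =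
     Ell G (if y = x then u else subst u x c) y (subst v x c)"

lemma size_subst [simp]: "size (subst t x c) = size t"
proof (induction t)
  case (Fn w ts)
  then show ?case by (induct ts) auto
next
  case (GApp G ts)
  then show ?case by (induct ts) auto
qed auto

function (sequential) evalt :: "(nat \<Rightarrow> nat) \<Rightarrow> (nat \<Rightarrow> nat) \<Rightarrow> trm \<Rightarrow> nat" where
  "evalt f s (Var x) = s x"
| "evalt f s (Cst n) = n"
| "evalt f s (Fn w ts) = w (map (evalt f s) ts)"
| "evalt f s (GApp G ts) = G (map (evalt f s) ts)"
| "evalt f s (FSym t) = f (evalt f s t)"
| "evalt f s (Ell G u x v) =
     G (map (\<lambda>i. evalt f s (subst u x i)) [0..<Suc (evalt f s v)])"
  by pat_completeness auto
termination
  by (relation "measure (\<lambda>(f, s, t). size t)")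
     (auto simp: size_list_estimation' less_Suc_eq_le)

fun sat :: "(nat \<Rightarrow> nat) \<Rightarrow> (nat \<Rightarrow> nat) \<Rightarrow> fm \<Rightarrow> bool" where
  "sat f s (Eq t1 t2) = (evalt f s t1 = evalt f s t2)"
| "sat f s (Pred p ts) = p (map (evalt f s) ts)"
| "sat f s FFalse = False"
| "sat f s (Neg \<phi>) = (\<not> sat f s \<phi>)"
| "sat f s (Conj \<phi> \<psi>) = (sat f s \<phi> \<and> sat f s \<psi>)"
| "sat f s (Disj \<phi> \<psi>) = (sat f s \<phi> \<or> sat f s \<psi>)"
| "sat f s (Imp \<phi> \<psi>) = (sat f s \<phi> \<longrightarrow> sat f s \<psi>)"
| "sat f s (All x \<phi>) = (\<forall>n. sat f (s(x := n)) \<phi>)"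
| "sat f s (Ex x \<phi>) = (\<exists>n. sat f (s(x := n)) \<phi>)"

definition sentence :: "fm \<Rightarrow> bool" where
  "sentence \<phi> \<longleftrightarrow> wff \<phi> \<and> fvf \<phi> = {}"

text \<open>M_f |= \<phi> for a sentence (the assignment is irrelevant; we use the constant 0 one).\<close>
definition models :: "(nat \<Rightarrow> nat) \<Rightarrow> fm \<Rightarrow> bool" where
  "models f \<phi> \<longleftrightarrow> sat f (\<lambda>_. 0) \<phi>"

definition defines_set :: "fm \<Rightarrow> (nat \<Rightarrow> nat) set \<Rightarrow> bool" where
  "defines_set \<phi> S \<longleftrightarrow> sentence \<phi> \<and> (\<forall>f. models f \<phi> \<longleftrightarrow> f \<in> S)"

end

theory Submission
  imports Defs
begin

text \<open>An overguess \<mu> for S can be normalised so that a single number x serves both as the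
  threshold and as the bound: f \<in> S iff \<mu>(f(0),\<dots>,f(n)) \<le> x for all n \<ge> x. This is an
  \<exists>\<forall> condition, and the ellipsis G(f(0),\<dots>,f(y)) lets one atomic formula in x and y read off
  \<mu>(f(0),\<dots>,f(y)) once \<mu> is coded into a total function G into \<nat>.\<close>

lemma eventually_bounded_iff_diagonal:
  fixes g :: "nat \<Rightarrow> enat"
  shows "(\<exists>B N. \<forall>n\<ge>N. g n \<le> enat B) \<longleftrightarrow> (\<exists>x. \<forall>n\<ge>x. g n \<le> enat x)"
proof
  assume "\<exists>B N. \<forall>n\<ge>N. g n \<le> enat B"
  then obtain B N where bound: "\<forall>n\<ge>N. g n \<le> enat B" by blast
  have "g n \<le> enat (max B N)" if "max B N \<le> n" for n
    using bound that order_trans[of "g n" "enat B"] by simp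
  then show "\<exists>x. \<forall>n\<ge>x. g n \<le> enat x" by blast
qed blast

lemma divergent_not_eventually_bounded:
  fixes g :: "nat \<Rightarrow> enat"
  assumes "\<forall>B. \<exists>N. \<forall>n\<ge>N. enat B \<le> g n"
  shows "\<not> (\<exists>B N. \<forall>n\<ge>N. g n \<le> enat B)"
proof
  assume "\<exists>B N. \<forall>n\<ge>N. g n \<le> enat B"
  then obtain B N where bound: "\<forall>n\<ge>N. g n \<le> enat B" by blast
  obtain M where "\<forall>n\<ge>M. enat (Suc B) \<le> g n" using assms by blast
  then have "enat (Suc B) \<le> g (max M N)" by simp
  also have "\<dots> \<le> enat B" using bound by simp
  finally show False by simp
qed

lemma overguessable_diagonal:
  assumes "overguessable S"
  obtains \<mu> :: "nat list \<Rightarrow> enat"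
  where "\<And>f. f \<in> S \<longleftrightarrow> (\<exists>x. \<forall>n\<ge>x. \<mu> (initseg f n) \<le> enat x)"
proof -
  obtain \<mu> :: "nat list \<Rightarrow> enat" where
    bounded: "\<forall>f \<in> S. \<exists>B N. \<forall>n\<ge>N. \<mu> (initseg f n) \<le> enat B" and
    divergent: "\<forall>f. f \<notin> S \<longrightarrow> (\<forall>B. \<exists>N. \<forall>n\<ge>N. enat B \<le> \<mu> (initseg f n))"
    using assms unfolding overguessable_def by blast
  have in_S_iff: "f \<in> S \<longleftrightarrow> (\<exists>B N. \<forall>n\<ge>N. \<mu> (initseg f n) \<le> enat B)" for f
  proof (cases "f \<in> S")
    case False
    then show ?thesis
      using divergent divergent_not_eventually_bounded[of "\<lambda>n. \<mu> (initseg f n)"] by blast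
  qed (use bounded in blast)
  show thesis
    by (rule that) (simp only: in_S_iff eventually_bounded_iff_diagonal)
qed

text \<open>Symbols of L_max denote \<nat>-valued functions, so \<infinity> is coded as 0 and k as k + 1.\<close>
definition enat_code :: "enat \<Rightarrow> nat" where
  "enat_code e = (case e of enat k \<Rightarrow> Suc k | \<infinity> \<Rightarrow> 0)"

lemma enat_code_le_iff: "0 < enat_code e \<and> enat_code e \<le> Suc x \<longleftrightarrow> e \<le> enat x"
  by (cases e) (auto simp: enat_code_def)

definition bound_after :: "nat list \<Rightarrow> bool" where
  "bound_after l \<longleftrightarrow> (l ! 0 \<le> l ! 1 \<longrightarrow> 0 < l ! 2 \<and> l ! 2 \<le> Suc (l ! 0))"

text \<open>The matrix says: if y \<ge> x then \<mu>(f(0),\<dots>,f(y)) \<le> x, with variables x = 0 and y = 1;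
  variable 2 is bound by the ellipsis.\<close>
definition diagonal_bound_matrix :: "(nat list \<Rightarrow> enat) \<Rightarrow> fm" where
  "diagonal_bound_matrix \<mu> =
     Pred bound_after [Var 0, Var 1, Ell (enat_code \<circ> \<mu>) (FSym (Var 2)) 2 (Var 1)]"

lemma qfree_diagonal_bound_matrix: "qfree (diagonal_bound_matrix \<mu>)"
  by (simp add: diagonal_bound_matrix_def)

lemma sentence_diagonal_bound: "sentence (Ex 0 (All 1 (diagonal_bound_matrix \<mu>)))"
  by (auto simp: sentence_def diagonal_bound_matrix_def)

lemma models_diagonal_bound:
  "models f (Ex 0 (All 1 (diagonal_bound_matrix \<mu>))) \<longleftrightarrow>
     (\<exists>x. \<forall>n\<ge>x. \<mu> (initseg f n) \<le> enat x)"
  by (simp add: models_def diagonal_bound_matrix_def bound_after_def enat_code_le_iff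
      initseg_def)

theorem proposition4p5:
  fixes S :: "(nat \<Rightarrow> nat) set"
  assumes "overguessable S"
  shows "\<exists>x y \<phi>. qfree \<phi> \<and> defines_set (Ex x (All y \<phi>)) S"
proof -
  obtain \<mu> where "\<And>f. f \<in> S \<longleftrightarrow> (\<exists>x. \<forall>n\<ge>x. \<mu> (initseg f n) \<le> enat x)"
    using overguessable_diagonal assms by blast
  then have "defines_set (Ex 0 (All 1 (diagonal_bound_matrix \<mu>))) S"
    unfolding defines_set_def using sentence_diagonal_bound models_diagonal_bound by blast
  then show ?thesis using qfree_diagonal_bound_matrix by blast
qed

end
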